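(* Let $\mathcal K\subseteq\mathbb{Z}$ be finite and $\Omega=\bigcup_{k\in\mathcal K}(k\pi,\,k\pi+\pi)$. Then $\cot:\Omega\to\mathbb{R}$ is amenable.
   Context: Relative distance on $\mathbb{R}$: $\mathrm{dist}(x,y)=0$ if $x=y=0$, $\mathrm{dist}(x,y)=|\log(y/x)|$ if $xy>0$, and $\mathrm{dist}(x,y)=\infty$ otherwise. For a real analytic function $f$ on an open set $\Omega\subseteq\mathbb{R}$, not identically zero, the condition number is $\kappa(f,x)=0$ if $x=0$, $\kappa(f,x)=\infty$ if $x\neq0$ and $f(x)=0$, and $\kappa(f,x)=|x|\,|f'(x)|/|f(x)|$ otherwise; $\mu(f,x)=1+\kappa(f,x)$. $f:\Omega\to\mathbb{R}$ is amenable if there is $C>0$ such that for every $x\in\Omega$ with $\kappa(f,x)<\infty$, the set $B_x=\{y\in\mathbb{R}:\mathrm{dist}(y,x)<1/(C\mu(f,x))\}$ is contained in $\Omega$ and $\mu(f,y)\leq C\mu(f,x)$ for all $y\in B_x$. *)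

theory Defs
  imports "HOL-Analysis.Analysis"
begin

definition reldist :: "real \<Rightarrow> real \<Rightarrow> ereal" where
  "reldist x y = (if x = 0 \<and> y = 0 then 0
                  else if x * y > 0 then ereal \<bar>ln (y / x)\<bar>
                  else \<infinity>)"

definition cond_num :: "(real \<Rightarrow> real) \<Rightarrow> real \<Rightarrow> ereal" where
  "cond_num f x = (if x = 0 then 0
                   else if f x = 0 then \<infinity>
                   else ereal (\<bar>x\<bar> * \<bar>deriv f x\<bar> / \<bar>f x\<bar>))"

definition mu_num :: "(real \<Rightarrow> real) \<Rightarrow> real \<Rightarrow> ereal" where
  "mu_num f x = 1 + cond_num f x"

definition amenable :: "(real \<Rightarrow> real) \<Rightarrow> real set \<Rightarrow> bool" where
  "amenable f \<Omega> \<longleftrightarrow> (\<exists>C::real. C > 0 \<and>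
     (\<forall>x\<in>\<Omega>. cond_num f x < \<infinity> \<longrightarrow>
        {y. reldist y x < 1 / (ereal C * mu_num f x)} \<subseteq> \<Omega> \<and>
        (\<forall>y\<in>{y. reldist y x < 1 / (ereal C * mu_num f x)}.
            mu_num f y \<le> ereal C * mu_num f x)))"

end

theory Submission
  imports Defs
begin

text \<open>Since \<open>cot' = -1/sin\<^sup>2\<close>, the condition number of \<open>cot\<close> is \<open>2\<bar>x\<bar> / \<bar>sin (2x)\<bar>\<close>. A point \<open>y\<close>
  within relative distance \<open>1/(4\<mu>(x))\<close> of \<open>x\<close> satisfies \<open>\<bar>y - x\<bar> < \<bar>sin (2x)\<bar>/4\<close>, so, \<open>sin\<close> being
  1-Lipschitz, \<open>\<bar>sin (2y)\<bar> > \<bar>sin (2x)\<bar>/2\<close>. As \<open>sin (2\<cdot>)\<close> vanishes at the endpoints \<open>k\<pi>\<close>, \<open>y\<close> cannot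
  leave the interval \<open>(k\<pi>, k\<pi> + \<pi>)\<close> containing \<open>x\<close>, and \<open>\<kappa>(y) \<le> 4\<kappa>(x)\<close>; thus \<open>C = 4\<close> works.\<close>

lemma abs_sin_diff_le: "\<bar>sin a - sin b\<bar> \<le> \<bar>a - b\<bar>" for a b :: real
proof -
  have "\<bar>sin a - sin b\<bar> = 2 * \<bar>sin ((a - b) / 2)\<bar> * \<bar>cos ((a + b) / 2)\<bar>"
    by (simp add: sin_diff_sin abs_mult)
  also have "\<dots> \<le> 2 * \<bar>(a - b) / 2\<bar> * 1"
    by (intro mult_mono abs_sin_x_le_abs_x) auto
  finally show ?thesis by simp
qed

lemma abs_exp_minus_one_le:
  fixes l :: real
  assumes "\<bar>l\<bar> \<le> 1/2"
  shows "\<bar>exp l - 1\<bar> \<le> 2 * \<bar>l\<bar>"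
proof (cases "l \<ge> 0")
  case True
  then show ?thesis using real_exp_bound_lemma[of l] assms by auto
next
  case False
  then have "exp l \<le> 1" by simp
  with exp_ge_add_one_self[of l] False show ?thesis by linarith
qed

lemma sin_neq_zero_between_multiples_pi:
  assumes "of_int k * pi < x" "x < of_int k * pi + pi"
  shows "sin x \<noteq> 0"
proof
  assume "sin x = 0"
  then obtain i :: int where "x = of_int i * pi" by (auto simp: sin_zero_iff_int2)
  with assms have "of_int k * pi < of_int i * pi" "of_int i * pi < of_int (k + 1) * pi"
    by (auto simp: algebra_simps)
  then have "k < i" "i < k + 1" by (simp_all add: mult_less_cancel_right)
  then show False by simp
qed

lemma cond_num_cot:
  assumes "sin (2 * x) \<noteq> 0"
  shows "cond_num cot x = ereal (2 * \<bar>x\<bar> / \<bar>sin (2 * x)\<bar>)"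
proof -
  have x: "x \<noteq> 0" and s: "sin x \<noteq> 0" and c: "cos x \<noteq> 0"
    using assms by (auto simp: sin_double)
  have "deriv cot x = - inverse ((sin x)\<^sup>2)"
    using DERIV_cot[OF s] by (rule DERIV_imp_deriv)
  then have "\<bar>deriv cot x\<bar> = 1 / (\<bar>sin x\<bar> * \<bar>sin x\<bar>)"
    by (simp add: abs_mult_self_eq power2_eq_square divide_inverse)
  moreover have "\<bar>cot x\<bar> = \<bar>cos x\<bar> / \<bar>sin x\<bar>"
    by (simp add: cot_def abs_divide)
  ultimately have "\<bar>x\<bar> * \<bar>deriv cot x\<bar> / \<bar>cot x\<bar> = \<bar>x\<bar> / (\<bar>sin x\<bar> * \<bar>cos x\<bar>)"
    using s c by (simp del: abs_mult_self_eq)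
  also have "\<dots> = 2 * \<bar>x\<bar> / \<bar>sin (2 * x)\<bar>"
    by (simp add: sin_double abs_mult)
  finally show ?thesis
    using x s c by (simp add: cond_num_def cot_def)
qed

lemma reldist_lt_imp_abs_diff_le:
  assumes "reldist y x < ereal r" "r \<le> 1/2" "x \<noteq> 0"
  shows "\<bar>y - x\<bar> \<le> 2 * r * \<bar>x\<bar>"
proof -
  have "y * x > 0" and lr: "\<bar>ln (x / y)\<bar> < r"
    using assms(1,3) by (auto simp: reldist_def split: if_splits)
  then have yx: "y / x > 0"
    by (auto simp: zero_less_divide_iff zero_less_mult_iff)
  define l where "l = ln (y / x)"
  have "ln (x / y) = - l"
    using ln_inverse[of "y / x"] by (simp add: l_def)
  with lr have "\<bar>l\<bar> < r" by simp
  have "y - x = x * (exp l - 1)"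
    using yx assms(3) by (simp add: l_def algebra_simps)
  then have "\<bar>y - x\<bar> = \<bar>x\<bar> * \<bar>exp l - 1\<bar>" by (simp add: abs_mult)
  also have "\<dots> \<le> \<bar>x\<bar> * (2 * r)"
    using abs_exp_minus_one_le[of l] \<open>\<bar>l\<bar> < r\<close> assms(2) by (intro mult_left_mono) auto
  finally show ?thesis by (simp add: algebra_simps)
qed

lemma abs_sin_double_gt_half:
  fixes x y :: real
  assumes "\<bar>y - x\<bar> < \<bar>sin (2 * x)\<bar> / 4"
  shows "\<bar>sin (2 * y)\<bar> > \<bar>sin (2 * x)\<bar> / 2"
  using abs_sin_diff_le[of "2 * y" "2 * x"] assms by linarith

lemma near_point_between_multiples_pi:
  assumes "of_int k * pi < x" "x < of_int k * pi + pi" "\<bar>y - x\<bar> < \<bar>sin (2 * x)\<bar> / 4"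
  shows "of_int k * pi < y \<and> y < of_int k * pi + pi"
proof -
  have endpoints: "sin (2 * (of_int k * pi)) = 0" "sin (2 * (of_int k * pi + pi)) = 0"
  proof -
    have "2 * (of_int k * pi) = of_int (2 * k) * pi" "2 * (of_int k * pi + pi) = of_int (2 * k + 2) * pi"
      by (simp_all add: algebra_simps)
    then show "sin (2 * (of_int k * pi)) = 0" "sin (2 * (of_int k * pi + pi)) = 0"
      by (simp_all only: sin_zero_iff_int2) blast+
  qed
  have sin_pos: "\<bar>sin (2 * z)\<bar> > 0" if "\<bar>z - x\<bar> < \<bar>sin (2 * x)\<bar> / 4" for z
    using abs_sin_double_gt_half[OF that] by linarith
  have "of_int k * pi < y"
  proof (rule ccontr)
    assume "\<not> ?thesis"
    with assms have "\<bar>of_int k * pi - x\<bar> < \<bar>sin (2 * x)\<bar> / 4" by auto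
    from sin_pos[OF this] endpoints(1) show False by simp
  qed
  moreover have "y < of_int k * pi + pi"
  proof (rule ccontr)
    assume "\<not> ?thesis"
    with assms have "\<bar>of_int k * pi + pi - x\<bar> < \<bar>sin (2 * x)\<bar> / 4" by auto
    from sin_pos[OF this] endpoints(2) show False by simp
  qed
  ultimately show ?thesis ..
qed

lemma mu_num_cot_le_on_relative_ball:
  assumes x: "of_int k * pi < x" "x < of_int k * pi + pi" and "cos x \<noteq> 0"
    and y: "reldist y x < 1 / (ereal 4 * mu_num cot x)"
  shows "of_int k * pi < y \<and> y < of_int k * pi + pi \<and> mu_num cot y \<le> ereal 4 * mu_num cot x"
proof -
  define S where "S = \<bar>sin (2 * x)\<bar>"
  define \<kappa> where "\<kappa> = 2 * \<bar>x\<bar> / S"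
  define r where "r = 1 / (4 * (1 + \<kappa>))"
  have "S > 0"
    using sin_neq_zero_between_multiples_pi[OF x] \<open>cos x \<noteq> 0\<close> by (simp add: S_def sin_double)
  then have "x \<noteq> 0"
    by (auto simp: S_def)
  have "\<kappa> > 0"
    using \<open>S > 0\<close> \<open>x \<noteq> 0\<close> by (simp add: \<kappa>_def)
  then have "r \<le> 1/4" "r * \<kappa> < 1/4"
    by (simp_all add: r_def field_simps)
  have mu_x: "mu_num cot x = ereal (1 + \<kappa>)"
    using cond_num_cot \<open>S > 0\<close> by (simp add: mu_num_def S_def \<kappa>_def)
  have "1 / (ereal 4 * mu_num cot x) = ereal r"
    using \<open>\<kappa> > 0\<close> by (simp add: mu_x r_def one_ereal_def divide_ereal_def inverse_eq_divide)
  with y have "\<bar>y - x\<bar> \<le> 2 * r * \<bar>x\<bar>"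
    using reldist_lt_imp_abs_diff_le \<open>r \<le> 1/4\<close> \<open>x \<noteq> 0\<close> by simp
  then have near: "\<bar>y - x\<bar> < S / 4" and abs_y: "\<bar>y\<bar> \<le> 2 * \<bar>x\<bar>"
    using \<open>r * \<kappa> < 1/4\<close> \<open>S > 0\<close> \<open>r \<le> 1/4\<close> mult_right_mono[of r "1/4" "\<bar>x\<bar>"]
    by (auto simp: \<kappa>_def field_simps)
  have sin_y: "\<bar>sin (2 * y)\<bar> > S / 2"
    using abs_sin_double_gt_half near by (simp add: S_def)
  have "2 * \<bar>y\<bar> / \<bar>sin (2 * y)\<bar> \<le> 2 * (2 * \<bar>x\<bar>) / (S / 2)"
    using abs_y sin_y \<open>S > 0\<close> by (intro frac_le) auto
  also have "\<dots> = 4 * \<kappa>"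
    by (simp add: \<kappa>_def)
  finally have "mu_num cot y \<le> ereal (1 + 4 * \<kappa>)"
    using cond_num_cot[of y] sin_y \<open>S > 0\<close> by (simp add: mu_num_def)
  also have "\<dots> \<le> ereal 4 * mu_num cot x"
    using \<open>\<kappa> > 0\<close> by (simp add: mu_x)
  finally have "mu_num cot y \<le> ereal 4 * mu_num cot x" .
  with near_point_between_multiples_pi[OF x] near show ?thesis
    by (simp add: S_def)
qed

lemma amenable_cot_Union_intervals:
  "amenable cot (\<Union>k\<in>K. {of_int k * pi <..< of_int k * pi + pi})" (is "amenable cot ?\<Omega>")
proof -
  have key: "y \<in> ?\<Omega> \<and> mu_num cot y \<le> ereal 4 * mu_num cot x"
    if "x \<in> ?\<Omega>" "cond_num cot x < \<infinity>" "reldist y x < 1 / (ereal 4 * mu_num cot x)" for x y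
  proof -
    from that(1) obtain k where "k \<in> K" and x: "of_int k * pi < x" "x < of_int k * pi + pi"
      by auto
    have "x \<noteq> 0"
      using sin_neq_zero_between_multiples_pi[OF x] by auto
    with that(2) have "cos x \<noteq> 0"
      by (auto simp: cond_num_def cot_def)
    with mu_num_cot_le_on_relative_ball[OF x _ that(3)] \<open>k \<in> K\<close> show ?thesis
      by auto
  qed
  have "{y. reldist y x < 1 / (ereal 4 * mu_num cot x)} \<subseteq> ?\<Omega> \<and>
      (\<forall>y\<in>{y. reldist y x < 1 / (ereal 4 * mu_num cot x)}. mu_num cot y \<le> ereal 4 * mu_num cot x)"
    if "x \<in> ?\<Omega>" "cond_num cot x < \<infinity>" for x
    using key[OF that] by (intro conjI subsetI ballI) (simp_all only: mem_Collect_eq)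
  then show ?thesis
    unfolding amenable_def by (intro exI[of _ 4]) simp
qed

theorem mainTheorem12:
  fixes K :: "int set"
  assumes "finite K"
  shows "amenable cot (\<Union>k\<in>K. {real_of_int k * pi <..< real_of_int k * pi + pi})"
  by (rule amenable_cot_Union_intervals)

end
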